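(* Let $\mathcal{A}=(Q,\delta,I,F)$ be a complete Büchi automaton, let $p,q\in Q$ with $p\preceq_{\mathit{di}}q$, let $\alpha$ be an infinite word and let $\mathcal{G}_\alpha=(V,E)$ be the run DAG of $\mathcal{A}$ over $\alpha$. Then for all $i\ge0$, if $(p,i)\in V$ and $(q,i)\in V$, then $\mathrm{rank}_\alpha(p,i)\le\mathrm{rank}_\alpha(q,i)$.
   Context: A Büchi automaton is $\mathcal{A}=(Q,\delta,I,F)$ over a finite alphabet $\Sigma$, $\delta:Q\times\Sigma\to2^Q$, complete if $\delta(q,a)\ne\emptyset$ always; $n=|Q|$. A run from $q$ on $\alpha=\alpha_0\alpha_1\cdots$ is a state sequence $\rho$ with $\rho_0=q$, $\rho_{i+1}\in\delta(\rho_i,\alpha_i)$. Direct simulation: in the game from $(p_0,r_0)$, in round $i$ Spoiler picks $p_i\xrightarrow{\alpha_i}p_{i+1}$ and Duplicator answers $r_i\xrightarrow{\alpha_i}r_{i+1}$; a Duplicator strategy is a map $\sigma$ with $\sigma(r,p\xrightarrow{a}p')\in\delta(r,a)$ (no lookahead). Duplicator wins if for all $i$, $p_i\in F$ implies $r_i\in F$. $p\preceq_{\mathit{di}}r$ iff Duplicator has a winning strategy from $(p,r)$. Run DAG: $\mathcal{G}_\alpha=(V,E)$ with $V\subseteq Q\times\omega$, $(q,i)\in V$ iff some run of $\mathcal{A}$ over $\alpha$ from an initial state has $\rho_i=q$, and $((q,i),(q',i'))\in E$ iff $i'=i+1$ and $q'\in\delta(q,\alpha_i)$. A vertex $(p,i)$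 is accepting if $p\in F$; finite in a subgraph if only finitely many vertices are reachable from it there; endangered if it cannot reach an accepting vertex there. Ranks: let $\mathcal{G}^0=\mathcal{G}_\alpha$, $j=0$; repeat until fixpoint or for at most $2n+1$ steps: assign rank $j$ to all finite vertices of $\mathcal{G}^j$, let $\mathcal{G}^{j+1}$ be $\mathcal{G}^j$ without them; assign rank $j+1$ to all endangered vertices of $\mathcal{G}^{j+1}$, let $\mathcal{G}^{j+2}$ be $\mathcal{G}^{j+1}$ without them; $j:=j+2$. Vertices never assigned a rank get rank $\omega$. $\mathrm{rank}_\alpha(v)$ is the rank of $v$. *)

theory Defs
  imports Main "HOL-Library.Extended_Nat"
begin

definition buchi :: "'q set \<Rightarrow> 'a set \<Rightarrow> ('q \<Rightarrow> 'a \<Rightarrow> 'q set) \<Rightarrow> 'q set \<Rightarrow> 'q set \<Rightarrow> bool" where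
  "buchi Q Sig delta I F \<longleftrightarrow> finite Q \<and> finite Sig \<and> I \<subseteq> Q \<and> F \<subseteq> Q \<and>
     (\<forall>q\<in>Q. \<forall>a\<in>Sig. delta q a \<subseteq> Q)"

definition complete_aut :: "'q set \<Rightarrow> 'a set \<Rightarrow> ('q \<Rightarrow> 'a \<Rightarrow> 'q set) \<Rightarrow> bool" where
  "complete_aut Q Sig delta \<longleftrightarrow> (\<forall>q\<in>Q. \<forall>a\<in>Sig. delta q a \<noteq> {})"

text \<open>Duplicator's answers in the direct simulation game, following a memoryless strategy sigma
  (which maps Duplicator's current state and Spoiler's move (p, a, p') to a successor).\<close>

fun dup_run :: "('q \<Rightarrow> 'q \<times> 'a \<times> 'q \<Rightarrow> 'q) \<Rightarrow> 'q \<Rightarrow> (nat \<Rightarrow> 'q) \<Rightarrow> (nat \<Rightarrow> 'a) \<Rightarrow> nat \<Rightarrow> 'q" where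
  "dup_run \<sigma> r0 ps w 0 = r0"
| "dup_run \<sigma> r0 ps w (Suc i) = \<sigma> (dup_run \<sigma> r0 ps w i) (ps i, w i, ps (Suc i))"

definition dsim :: "'q set \<Rightarrow> 'a set \<Rightarrow> ('q \<Rightarrow> 'a \<Rightarrow> 'q set) \<Rightarrow> 'q set \<Rightarrow> 'q \<Rightarrow> 'q \<Rightarrow> bool" where
  "dsim Q Sig delta F p r \<longleftrightarrow>
     (\<exists>\<sigma>. (\<forall>r'\<in>Q. \<forall>a\<in>Sig. \<forall>p'\<in>Q. \<forall>p''\<in>delta p' a. \<sigma> r' (p', a, p'') \<in> delta r' a) \<and>
          (\<forall>w ps. (\<forall>i. w i \<in> Sig) \<longrightarrow> ps 0 = p \<longrightarrow> (\<forall>i. ps (Suc i) \<in> delta (ps i) (w i)) \<longrightarrow>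
              (\<forall>i. ps i \<in> F \<longrightarrow> dup_run \<sigma> r ps w i \<in> F)))"

definition is_run :: "('q \<Rightarrow> 'a \<Rightarrow> 'q set) \<Rightarrow> (nat \<Rightarrow> 'a) \<Rightarrow> (nat \<Rightarrow> 'q) \<Rightarrow> bool" where
  "is_run delta \<alpha> \<rho> \<longleftrightarrow> (\<forall>j. \<rho> (Suc j) \<in> delta (\<rho> j) (\<alpha> j))"

definition runV :: "('q \<Rightarrow> 'a \<Rightarrow> 'q set) \<Rightarrow> 'q set \<Rightarrow> (nat \<Rightarrow> 'a) \<Rightarrow> ('q \<times> nat) set" where
  "runV delta I \<alpha> = {(q, i). \<exists>\<rho>. \<rho> 0 \<in> I \<and> is_run delta \<alpha> \<rho> \<and> \<rho> i = q}"

definition runE :: "('q \<Rightarrow> 'a \<Rightarrow> 'q set) \<Rightarrow> 'q set \<Rightarrow> (nat \<Rightarrow> 'a) \<Rightarrow> (('q \<times> nat) \<times> ('q \<times> nat)) set" where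
  "runE delta I \<alpha> = {((q, i), (q', i')). (q, i) \<in> runV delta I \<alpha> \<and> (q', i') \<in> runV delta I \<alpha> \<and>
                       i' = Suc i \<and> q' \<in> delta q (\<alpha> i)}"

definition reach_in :: "('q \<Rightarrow> 'a \<Rightarrow> 'q set) \<Rightarrow> 'q set \<Rightarrow> (nat \<Rightarrow> 'a) \<Rightarrow> ('q \<times> nat) set
    \<Rightarrow> 'q \<times> nat \<Rightarrow> ('q \<times> nat) set" where
  "reach_in delta I \<alpha> S v = {u. (v, u) \<in> (runE delta I \<alpha> \<inter> (S \<times> S))\<^sup>*}"

definition finite_vs :: "('q \<Rightarrow> 'a \<Rightarrow> 'q set) \<Rightarrow> 'q set \<Rightarrow> (nat \<Rightarrow> 'a) \<Rightarrow> ('q \<times> nat) set \<Rightarrow> ('q \<times> nat) set" where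
  "finite_vs delta I \<alpha> S = {v \<in> S. finite (reach_in delta I \<alpha> S v)}"

definition endangered_vs :: "('q \<Rightarrow> 'a \<Rightarrow> 'q set) \<Rightarrow> 'q set \<Rightarrow> 'q set \<Rightarrow> (nat \<Rightarrow> 'a) \<Rightarrow> ('q \<times> nat) set \<Rightarrow> ('q \<times> nat) set" where
  "endangered_vs delta I F \<alpha> S = {v \<in> S. \<forall>u \<in> reach_in delta I \<alpha> S v. fst u \<notin> F}"

fun subG :: "('q \<Rightarrow> 'a \<Rightarrow> 'q set) \<Rightarrow> 'q set \<Rightarrow> 'q set \<Rightarrow> (nat \<Rightarrow> 'a) \<Rightarrow> nat \<Rightarrow> ('q \<times> nat) set" where
  "subG delta I F \<alpha> 0 = runV delta I \<alpha>"
| "subG delta I F \<alpha> (Suc j) =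
     (if even j then subG delta I F \<alpha> j - finite_vs delta I \<alpha> (subG delta I F \<alpha> j)
      else subG delta I F \<alpha> j - endangered_vs delta I F \<alpha> (subG delta I F \<alpha> j))"

definition rank :: "'q set \<Rightarrow> ('q \<Rightarrow> 'a \<Rightarrow> 'q set) \<Rightarrow> 'q set \<Rightarrow> 'q set \<Rightarrow> (nat \<Rightarrow> 'a) \<Rightarrow> 'q \<times> nat \<Rightarrow> enat" where
  "rank Q delta I F \<alpha> v =
     (if \<exists>j \<le> 2 * card Q. v \<in> subG delta I F \<alpha> j - subG delta I F \<alpha> (Suc j)
      then enat (LEAST j. v \<in> subG delta I F \<alpha> j - subG delta I F \<alpha> (Suc j))
      else \<infinity>)"

end

theory Submission
  imports Defs
begin

text \<open>Duplicator's winning strategy from (p, q) transports every path of Spoiler in a pruned run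
  DAG to a path from (q, i) whose endpoint again simulates the endpoint of Spoiler's path. Hence
  each set G^j is closed under replacing a vertex by a simulating vertex at the same level: an
  infinite DAG below (p, i) yields one below (q, i) (there are only finitely many states per level),
  and an accepting vertex below (p, i) yields a simulating, hence accepting, vertex below (q, i).
  So (q, i) is removed no earlier than (p, i).\<close>

lemma dup_run_case_nat:
  "dup_run \<sigma> q (case_nat p ps) (case_nat a w) (Suc k) = dup_run \<sigma> (\<sigma> q (p, a, ps 0)) ps w k"
  by (induction k) auto

lemma dsim_step:
  assumes "dsim Q Sig delta F p q" and "p \<in> Q" and "q \<in> Q" and "a \<in> Sig" and "p' \<in> delta p a"
  shows "\<exists>q' \<in> delta q a. dsim Q Sig delta F p' q'"
proof -
  from assms(1) obtain \<sigma> where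
    valid: "\<forall>r\<in>Q. \<forall>b\<in>Sig. \<forall>s\<in>Q. \<forall>s'\<in>delta s b. \<sigma> r (s, b, s') \<in> delta r b" and
    wins: "\<And>w ps i. \<forall>i. w i \<in> Sig \<Longrightarrow> ps 0 = p \<Longrightarrow> \<forall>i. ps (Suc i) \<in> delta (ps i) (w i) \<Longrightarrow>
             ps i \<in> F \<Longrightarrow> dup_run \<sigma> q ps w i \<in> F"
    unfolding dsim_def by blast
  define q' where "q' = \<sigma> q (p, a, p')"
  have "dsim Q Sig delta F p' q'"
    unfolding dsim_def
  proof (intro exI conjI allI impI)
    fix w ps i
    assume w: "\<forall>i. w i \<in> Sig" and ps0: "ps 0 = p'"
      and ps: "\<forall>i. ps (Suc i) \<in> delta (ps i) (w i)" and "ps i \<in> F"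
    \<comment> \<open>Spoiler's play from p' is the tail of his play from p that starts with the move p' in delta p a.\<close>
    have "dup_run \<sigma> q (case_nat p ps) (case_nat a w) (Suc i) \<in> F"
      by (rule wins) (use w ps ps0 assms(4,5) \<open>ps i \<in> F\<close> in \<open>auto split: nat.split\<close>)
    then show "dup_run \<sigma> q' ps w i \<in> F"
      by (simp only: dup_run_case_nat q'_def ps0[symmetric])
  qed (use valid in blast)
  moreover have "q' \<in> delta q a"
    using valid assms(2-5) unfolding q'_def by blast
  ultimately show ?thesis by blast
qed

lemma dsim_accepting:
  assumes "dsim Q Sig delta F p q" and "p \<in> F"
    and "\<forall>i. w i \<in> Sig" and "\<rho> 0 = p" and "is_run delta w \<rho>"
  shows "q \<in> F"
proof -
  from assms(1) obtain \<sigma> where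
    "\<forall>i. \<rho> i \<in> F \<longrightarrow> dup_run \<sigma> q \<rho> w i \<in> F"
    using assms(3-5) unfolding dsim_def is_run_def by blast
  from this[rule_format, of 0] show ?thesis using assms(2,4) by simp
qed

lemma exists_run_from:
  assumes "buchi Q Sig delta I F" and "complete_aut Q Sig delta"
    and "\<forall>k. w k \<in> Sig" and "x \<in> Q"
  shows "\<exists>\<rho>. \<rho> 0 = x \<and> is_run delta w \<rho>"
proof -
  define \<rho> where "\<rho> = rec_nat x (\<lambda>m y. SOME z. z \<in> delta y (w m))"
  have "\<rho> m \<in> Q \<and> \<rho> (Suc m) \<in> delta (\<rho> m) (w m)" for m
  proof (induction m)
    case 0
    have "delta x (w 0) \<noteq> {}" using assms(2-4) unfolding complete_aut_def by blast
    then show ?case using assms(4) unfolding \<rho>_def by (simp add: some_in_eq)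
  next
    case (Suc m)
    then have "\<rho> (Suc m) \<in> Q" using assms(1,3) unfolding buchi_def by blast
    moreover have "delta (\<rho> (Suc m)) (w (Suc m)) \<noteq> {}"
      using calculation assms(2,3) unfolding complete_aut_def by blast
    ultimately show ?case unfolding \<rho>_def by (simp add: some_in_eq)
  qed
  moreover have "\<rho> 0 = x" unfolding \<rho>_def by simp
  ultimately show ?thesis unfolding is_run_def by blast
qed

lemma exists_removal_step:
  fixes G :: "nat \<Rightarrow> 'b set"
  assumes "v \<in> G 0" and "v \<notin> G (Suc j)"
  shows "\<exists>k \<le> j. v \<in> G k - G (Suc k)"
  using assms(2)
proof (induction j)
  case (Suc j)
  then show ?case by (cases "v \<in> G (Suc j)") (auto intro: le_SucI)
qed (use assms(1) in auto)

lemma rank_mono_subG: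
  assumes "v \<in> runV delta I \<alpha>"
    and "\<And>j. v \<in> subG delta I F \<alpha> j \<Longrightarrow> w \<in> subG delta I F \<alpha> j"
  shows "rank Q delta I F \<alpha> v \<le> rank Q delta I F \<alpha> w"
proof (cases "\<exists>j \<le> 2 * card Q. w \<in> subG delta I F \<alpha> j - subG delta I F \<alpha> (Suc j)")
  case True
  let ?G = "subG delta I F \<alpha>"
  define j0 where "j0 = (LEAST j. w \<in> ?G j - ?G (Suc j))"
  obtain j1 where j1: "j1 \<le> 2 * card Q" "w \<in> ?G j1 - ?G (Suc j1)" using True by blast
  have "w \<in> ?G j0 - ?G (Suc j0)" unfolding j0_def by (rule LeastI) (rule j1(2))
  have "j0 \<le> j1" unfolding j0_def by (rule Least_le) (rule j1(2))
  have "v \<notin> ?G (Suc j0)" using assms(2) \<open>w \<in> ?G j0 - ?G (Suc j0)\<close> by blast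
  then obtain k where k: "k \<le> j0" "v \<in> ?G k - ?G (Suc k)"
    using exists_removal_step[of v ?G j0] assms(1) by auto
  have ex: "\<exists>j \<le> 2 * card Q. v \<in> ?G j - ?G (Suc j)"
    using k \<open>j0 \<le> j1\<close> j1(1) le_trans by blast
  have "(LEAST j. v \<in> ?G j - ?G (Suc j)) \<le> k" by (rule Least_le) (rule k(2))
  then have "(LEAST j. v \<in> ?G j - ?G (Suc j)) \<le> j0" using k(1) by linarith
  then show ?thesis
    unfolding rank_def if_P[OF ex] if_P[OF True] j0_def[symmetric] by simp
next
  case False
  then show ?thesis unfolding rank_def if_not_P[OF False] by simp
qed

locale run_dag =
  fixes Q :: "'q set" and Sig :: "'a set" and delta :: "'q \<Rightarrow> 'a \<Rightarrow> 'q set"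
    and I F :: "'q set" and \<alpha> :: "nat \<Rightarrow> 'a"
  assumes buchi: "buchi Q Sig delta I F"
    and complete: "complete_aut Q Sig delta"
    and word: "\<forall>k. \<alpha> k \<in> Sig"
begin

abbreviation "V \<equiv> runV delta I \<alpha>"
abbreviation "E \<equiv> runE delta I \<alpha>"
abbreviation "G \<equiv> subG delta I F \<alpha>"

definition sim :: "'q \<Rightarrow> 'q \<Rightarrow> bool" where
  "sim p q \<longleftrightarrow> p \<in> Q \<and> q \<in> Q \<and> dsim Q Sig delta F p q"

definition sim_closed :: "('q \<times> nat) set \<Rightarrow> bool" where
  "sim_closed S \<longleftrightarrow> (\<forall>p q i. sim p q \<longrightarrow> (p, i) \<in> S \<longrightarrow> (q, i) \<in> V \<longrightarrow> (q, i) \<in> S)"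

lemma delta_subset: "q \<in> Q \<Longrightarrow> delta q (\<alpha> k) \<subseteq> Q"
  using buchi word unfolding buchi_def by blast

lemma sim_step:
  assumes "sim p q" and "p' \<in> delta p (\<alpha> k)"
  shows "\<exists>q' \<in> delta q (\<alpha> k). sim p' q'"
  using dsim_step[of Q Sig delta F p q "\<alpha> k" p'] assms delta_subset word
  unfolding sim_def by blast

lemma sim_accepting:
  assumes "sim p q" and "p \<in> F"
  shows "q \<in> F"
proof -
  obtain \<rho> where "\<rho> 0 = p" "is_run delta \<alpha> \<rho>"
    using exists_run_from[OF buchi complete word] assms(1) unfolding sim_def by blast
  then show ?thesis using dsim_accepting[of Q Sig delta F p q] assms word unfolding sim_def by blast
qed

lemma runV_state_in_Q:
  assumes "(q, k) \<in> V"
  shows "q \<in> Q"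
proof -
  from assms obtain \<rho> where \<rho>: "\<rho> 0 \<in> I" "is_run delta \<alpha> \<rho>" "\<rho> k = q"
    unfolding runV_def by blast
  have "\<rho> m \<in> Q" for m
    using \<rho>(1,2) buchi delta_subset by (induction m) (auto simp: buchi_def is_run_def)
  then show ?thesis using \<rho>(3) by blast
qed

lemma runV_Suc:
  assumes "(q, k) \<in> V" and "q' \<in> delta q (\<alpha> k)"
  shows "(q', Suc k) \<in> V"
proof -
  from assms(1) obtain \<rho> where \<rho>: "\<rho> 0 \<in> I" "is_run delta \<alpha> \<rho>" "\<rho> k = q"
    unfolding runV_def by blast
  from assms(1) have "q \<in> Q" by (rule runV_state_in_Q)
  then obtain f where f: "f 0 = q'" "is_run delta (\<lambda>m. \<alpha> (Suc k + m)) f"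
    using exists_run_from[OF buchi complete, of "\<lambda>m. \<alpha> (Suc k + m)" q'] word assms(2) delta_subset
    by blast
  define \<rho>' where "\<rho>' = (\<lambda>m. if m \<le> k then \<rho> m else f (m - Suc k))"
  have "\<rho>' (Suc j) \<in> delta (\<rho>' j) (\<alpha> j)" for j
  proof -
    consider "j < k" | "j = k" | m where "j = Suc k + m"
      by (metis less_imp_Suc_add add_Suc linorder_neqE_nat)
    then show ?thesis
      by cases (use \<rho> f assms(2) in \<open>auto simp: \<rho>'_def is_run_def Suc_diff_le\<close>)
  qed
  then have "is_run delta \<alpha> \<rho>'" unfolding is_run_def by blast
  moreover have "\<rho>' 0 \<in> I" "\<rho>' (Suc k) = q'" using \<rho>(1) f(1) by (simp_all add: \<rho>'_def)
  ultimately show ?thesis unfolding runV_def by blast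
qed

lemma sim_closed_lift_path:
  assumes "sim_closed S" and "sim p q" and "(p, i) \<in> S" and "(q, i) \<in> V"
    and "((p, i), (p', k)) \<in> (E \<inter> S \<times> S)\<^sup>*"
  shows "\<exists>q'. sim p' q' \<and> ((q, i), (q', k)) \<in> (E \<inter> S \<times> S)\<^sup>*"
proof -
  have "\<exists>q'. sim p' q' \<and> (q', k) \<in> S \<and> (q', k) \<in> V \<and> ((q, i), (q', k)) \<in> (E \<inter> S \<times> S)\<^sup>*"
    using assms(5)
  proof (induction rule: rtrancl_induct2)
    case refl
    then show ?case using assms(1-4) unfolding sim_closed_def by blast
  next
    case (step s l s' l')
    then obtain r where
      r: "sim s r" "(r, l) \<in> S" "(r, l) \<in> V" "((q, i), (r, l)) \<in> (E \<inter> S \<times> S)\<^sup>*"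
      by blast
    from step.hyps(2) have l': "l' = Suc l" and "s' \<in> delta s (\<alpha> l)" and s': "(s', l') \<in> S"
      unfolding runE_def by auto
    then obtain r' where r': "r' \<in> delta r (\<alpha> l)" "sim s' r'" using sim_step r(1) by blast
    have "(r', Suc l) \<in> V" using runV_Suc r(3) r'(1) by blast
    moreover have "(r', Suc l) \<in> S"
      using assms(1) r'(2) s' calculation l' unfolding sim_closed_def by blast
    ultimately have "((r, l), (r', l')) \<in> E \<inter> S \<times> S"
      using r(2,3) r'(1) l' unfolding runE_def by auto
    then show ?case using r(4) r' \<open>(r', Suc l) \<in> V\<close> \<open>(r', Suc l) \<in> S\<close> l'
      by (blast intro: rtrancl_into_rtrancl)
  qed
  then show ?thesis by blast
qed

lemma sim_closed_remove_finite:
  assumes "sim_closed S"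
  shows "sim_closed (S - finite_vs delta I \<alpha> S)"
  unfolding sim_closed_def
proof (intro allI impI)
  fix p q i
  assume pq: "sim p q" and p: "(p, i) \<in> S - finite_vs delta I \<alpha> S" and q: "(q, i) \<in> V"
  have "(q, i) \<in> S" using assms pq p q unfolding sim_closed_def by blast
  let ?R = "reach_in delta I \<alpha> S"
  have "?R (p, i) \<subseteq> Q \<times> snd ` ?R (q, i)"
  proof
    fix u assume "u \<in> ?R (p, i)"
    then obtain q' where "sim (fst u) q'" "(q', snd u) \<in> ?R (q, i)"
      using sim_closed_lift_path[OF assms pq _ q, of "fst u" "snd u"] p
      unfolding reach_in_def by auto
    then show "u \<in> Q \<times> snd ` ?R (q, i)" unfolding sim_def by (cases u) force
  qed
  moreover have "finite Q" using buchi unfolding buchi_def by blast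
  moreover have "infinite (?R (p, i))" using p unfolding finite_vs_def by blast
  ultimately have "infinite (?R (q, i))" by (meson finite_SigmaI finite_imageI finite_subset)
  then show "(q, i) \<in> S - finite_vs delta I \<alpha> S"
    using \<open>(q, i) \<in> S\<close> unfolding finite_vs_def by blast
qed

lemma sim_closed_remove_endangered:
  assumes "sim_closed S"
  shows "sim_closed (S - endangered_vs delta I F \<alpha> S)"
  unfolding sim_closed_def
proof (intro allI impI)
  fix p q i
  assume pq: "sim p q" and p: "(p, i) \<in> S - endangered_vs delta I F \<alpha> S" and q: "(q, i) \<in> V"
  have "(q, i) \<in> S" using assms pq p q unfolding sim_closed_def by blast
  from p obtain p' k where "(p', k) \<in> reach_in delta I \<alpha> S (p, i)" "p' \<in> F"
    unfolding endangered_vs_def by auto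
  then obtain q' where "sim p' q'" "(q', k) \<in> reach_in delta I \<alpha> S (q, i)"
    using sim_closed_lift_path[OF assms pq _ q] p unfolding reach_in_def by blast
  moreover from calculation(1) \<open>p' \<in> F\<close> have "q' \<in> F" by (rule sim_accepting)
  ultimately have "(q, i) \<notin> endangered_vs delta I F \<alpha> S"
    unfolding endangered_vs_def by fastforce
  then show "(q, i) \<in> S - endangered_vs delta I F \<alpha> S" using \<open>(q, i) \<in> S\<close> by blast
qed

lemma sim_closed_subG: "sim_closed (G j)"
proof (induction j)
  case 0
  then show ?case unfolding sim_closed_def by simp
next
  case (Suc j)
  then show ?case
    by (cases "even j") (simp_all add: sim_closed_remove_finite sim_closed_remove_endangered)
qed

end

theorem lemma7:
  fixes Q :: "'q set" and Sig :: "'a set" and delta :: "'q \<Rightarrow> 'a \<Rightarrow> 'q set"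
    and I F :: "'q set" and p q :: 'q and \<alpha> :: "nat \<Rightarrow> 'a" and i :: nat
  assumes "buchi Q Sig delta I F"
    and "complete_aut Q Sig delta"
    and "p \<in> Q" and "q \<in> Q"
    and "dsim Q Sig delta F p q"
    and "\<forall>k. \<alpha> k \<in> Sig"
    and "(p, i) \<in> runV delta I \<alpha>"
    and "(q, i) \<in> runV delta I \<alpha>"
  shows "rank Q delta I F \<alpha> (p, i) \<le> rank Q delta I F \<alpha> (q, i)"
proof (rule rank_mono_subG)
  interpret run_dag Q Sig delta I F \<alpha> using assms(1,2,6) by unfold_locales
  have "sim p q" using assms(3-5) unfolding sim_def by blast
  then show "(q, i) \<in> subG delta I F \<alpha> j" if "(p, i) \<in> subG delta I F \<alpha> j" for j
    using sim_closed_subG[of j] that assms(8) unfolding sim_closed_def by blast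
qed (rule assms(7))

end
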